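(* Let $i,j,k$ be integers with $i\ge j\ge 0$ and $k\ge 1-j$. Then (a) $\displaystyle\sum_{r=j}^{i}(-1)^{i-r}\binom{r+k-1}{r-j}\,b_{i,r,k}=b_{i,j,0}$; (b) $\displaystyle\sum_{r=j}^{i}(-1)^{i-r}\binom{r+k-1}{r-j}\,b_{i,r,0}=b_{i,j,k}$.
   Context: For integers $i\ge0$, $j\ge0$ and real $k$, $b_{i,j,k}=\sum_{r=0}^{j}\binom{j}{r}(-1)^{j-r}(r+k)^i$, with the convention $0^0=1$. *)

theory Defs
  imports Complex_Main
begin

text \<open>b i j k = sum_{r=0}^{j} binom(j,r) (-1)^(j-r) (r+k)^i, for naturals i, j and real k.
  Isabelle's power satisfies 0^0 = 1, matching the paper's convention.\<close>
definition b :: "nat \<Rightarrow> nat \<Rightarrow> real \<Rightarrow> real" where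
  "b i j k = (\<Sum>r = 0..j. real (j choose r) * (-1) ^ (j - r) * (real r + k) ^ i)"

end

theory Submission
  imports Defs
begin

text \<open>
  b i j x is the j-th forward difference of t^i at x; it vanishes for j > i.  Newton's formula
  for the backward shift by a = k + j, i.e. E^(-a) = (1 + \<Delta>)^(-a) = \<Sum>m. (-a gchoose m) \<Delta>^m
  (a finite sum on polynomials), turns both left-hand sides into (-1)^(i+j) b i j (x - k - j),
  at x = k and x = 0 respectively.  Reversing the order of summation in b gives the reflection
  b i j (-x - j) = (-1)^(i+j) b i j x, which maps -j to 0 and -k - j to k.
\<close>

lemma b_atMost: "b i j x = (\<Sum>r\<le>j. real (j choose r) * (-1) ^ (j - r) * (real r + x) ^ i)"
  unfolding b_def by (simp add: atLeast0AtMost)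

lemma b_Suc_right: "b i (Suc j) x = b i j (x + 1) - b i j x"
proof -
  have "b i (Suc j) x = (\<Sum>r\<le>Suc j. real (j choose r) * (-1) ^ (Suc j - r) * (real r + x) ^ i)
      + (\<Sum>r\<le>j. real (j choose r) * (-1) ^ (j - r) * (real (Suc r) + x) ^ i)"
    unfolding b_atMost sum.atMost_Suc_shift[of _ j]
    by (simp add: sum.distrib algebra_simps)
  also have "(\<Sum>r\<le>Suc j. real (j choose r) * (-1) ^ (Suc j - r) * (real r + x) ^ i) = - b i j x"
    unfolding b_atMost sum_negf[symmetric] by (auto intro!: sum.cong simp: Suc_diff_le)
  also have "(\<Sum>r\<le>j. real (j choose r) * (-1) ^ (j - r) * (real (Suc r) + x) ^ i) = b i j (x + 1)"
    unfolding b_atMost by (simp add: add_ac)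
  finally show ?thesis by simp
qed

lemma b_Suc_Suc: "b (Suc i) (Suc j) x = real (Suc j) * b i j (x + 1) + x * b i (Suc j) x"
proof -
  have "b (Suc i) (Suc j) x
      = (\<Sum>r\<le>Suc j. real (Suc j choose r) * (-1) ^ (Suc j - r) * real r * (real r + x) ^ i)
        + x * b i (Suc j) x"
    unfolding b_atMost sum_distrib_left sum.distrib[symmetric]
    by (rule sum.cong) (auto simp: algebra_simps)
  also have "(\<Sum>r\<le>Suc j. real (Suc j choose r) * (-1) ^ (Suc j - r) * real r * (real r + x) ^ i)
     = (\<Sum>r\<le>j. real (Suc r * (Suc j choose Suc r)) * (-1) ^ (j - r) * (real r + (x + 1)) ^ i)"
    unfolding sum.atMost_Suc_shift by (simp add: algebra_simps)
  also have "\<dots> = real (Suc j) * b i j (x + 1)"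
    unfolding Suc_times_binomial b_atMost sum_distrib_left
    by (rule sum.cong) (auto simp: algebra_simps)
  finally show ?thesis .
qed

lemma b_eq_0: "i < j \<Longrightarrow> b i j x = 0"
proof (induction i arbitrary: j x)
  case 0
  then obtain j' where "j = Suc j'" by (cases j) auto
  show ?case unfolding \<open>j = Suc j'\<close> b_Suc_right by (simp add: b_def)
next
  case (Suc i)
  then obtain j' where "j = Suc j'" by (cases j) auto
  with Suc show ?case by (simp add: b_Suc_Suc)
qed

lemma neg_one_power_diff: "m \<le> n \<Longrightarrow> (-1::'a::ring_1) ^ (n - m) = (-1) ^ n * (-1) ^ m"
  by (metis neg_one_power_add_eq_neg_one_power_diff power_add)

lemma b_reflect: "b i j (- x - real j) = (-1) ^ (i + j) * b i j x"
proof -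
  have "b i j (- x - real j) = (\<Sum>r = 0..j. real (j choose (j - r)) * (-1) ^ (j - (j - r))
      * (real (j - r) - x - real j) ^ i)"
    unfolding b_def by (subst sum.atLeastAtMost_rev) simp
  also have "\<dots> = (\<Sum>r = 0..j. (-1) ^ (i + j) * (real (j choose r) * (-1) ^ (j - r) * (real r + x) ^ i))"
  proof (rule sum.cong)
    fix r assume "r \<in> {0..j}"
    then have "r \<le> j" by simp
    have "(- x - real r) ^ i = (-1) ^ i * (x + real r) ^ i"
      using power_minus[of "x + real r" i] by simp
    with \<open>r \<le> j\<close> show "real (j choose (j - r)) * (-1) ^ (j - (j - r))
        * (real (j - r) - x - real j) ^ i
        = (-1) ^ (i + j) * (real (j choose r) * (-1) ^ (j - r) * (real r + x) ^ i)"
      by (simp add: binomial_symmetric[symmetric] neg_one_power_diff of_nat_diff power_add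
          algebra_simps)
  qed simp
  finally show ?thesis
    by (simp add: b_def sum_distrib_left)
qed

lemma b_shift_minus_Newton:
  assumes "i \<le> j + N"
  shows "b i j (x - real a) = (\<Sum>m\<le>N. ((- real a) gchoose m) * b i (j + m) x)"
  using assms
proof (induction a arbitrary: j N)
  case 0
  then show ?case by (simp add: sum.atMost_shift)
next
  case (Suc a)
  txt \<open>
    Downward induction on j, starting above i where everything vanishes.  Writing S(h, j) for
    the right-hand side with -a replaced by h, Pascal's rule gives
    S(-a - 1, j) = S(-a, j) - S(-a - 1, j + 1), the recurrence b_Suc_right gives for the left.
  \<close>
  from Suc.prems show ?case
  proof (induction "Suc i - j" arbitrary: j rule: less_induct)
    case less
    show ?case
    proof (cases "i < j")
      case True
      then show ?thesis by (simp add: b_eq_0)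
    next
      case False
      define h where "h = - real (Suc a)"
      have "h + 1 = - real a" unfolding h_def by simp
      then have pascal: "(- real a) gchoose Suc m = (h gchoose m) + (h gchoose Suc m)" for m
        using gbinomial_Suc_Suc[of h m] by simp
      have "b i (j + Suc N) x = 0" using less.prems by (simp add: b_eq_0)
      then have "(\<Sum>m\<le>N. (h gchoose m) * b i (j + m) x)
          = (\<Sum>m\<le>Suc N. (h gchoose m) * b i (j + m) x)"
        by simp
      also have "\<dots> = b i j x + (\<Sum>m\<le>N. (h gchoose Suc m) * b i (Suc j + m) x)"
        unfolding sum.atMost_Suc_shift by simp
      also have "(\<Sum>m\<le>N. (h gchoose Suc m) * b i (Suc j + m) x)
          = (\<Sum>m\<le>N. ((- real a) gchoose Suc m) * b i (Suc j + m) x)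
            - (\<Sum>m\<le>N. (h gchoose m) * b i (Suc j + m) x)"
        unfolding sum_subtractf[symmetric]
        by (intro sum.cong) (simp_all add: pascal algebra_simps)
      also have "(\<Sum>m\<le>N. ((- real a) gchoose Suc m) * b i (Suc j + m) x)
          = b i j (x - real a) - b i j x"
        using Suc.IH[of j "Suc N"] less.prems unfolding sum.atMost_Suc_shift by simp
      also have "(\<Sum>m\<le>N. (h gchoose m) * b i (Suc j + m) x) = b i (Suc j) (x - real (Suc a))"
        using less.hyps[of "Suc j"] False less.prems unfolding h_def by simp
      finally show ?thesis
        using b_Suc_right[of i j "x - real (Suc a)"] unfolding h_def by simp
    qed
  qed
qed

lemma sum_alternating_gchoose_b:
  fixes k :: int
  assumes "j \<le> i" and "0 \<le> k + int j"
  shows "(\<Sum>r = j..i. (-1) ^ (i - r) * (real_of_int (int r + k - 1) gchoose (r - j)) * b i r x)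
    = (-1) ^ (i + j) * b i j (x - (real_of_int k + real j))"
proof -
  define a where "a = nat (k + int j)"
  have a: "real a = real_of_int k + real j" unfolding a_def using assms(2) by simp
  have "(\<Sum>r = j..i. (-1) ^ (i - r) * (real_of_int (int r + k - 1) gchoose (r - j)) * b i r x)
      = (\<Sum>m = 0..i - j. (-1) ^ (i - j - m) * ((real a + real m - 1) gchoose m) * b i (j + m) x)"
    unfolding sum.atLeastAtMost_shift_0[OF assms(1)]
  proof (intro sum.cong)
    fix m
    have upper: "real_of_int (int (j + m) + k - 1) = real a + real m - 1" using a by simp
    show "((\<lambda>r. (-1) ^ (i - r) * (real_of_int (int r + k - 1) gchoose (r - j)) * b i r x)
          \<circ> plus j) m
        = (-1) ^ (i - j - m) * ((real a + real m - 1) gchoose m) * b i (j + m) x"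
      unfolding comp_def upper by simp
  qed simp
  also have "\<dots> = (-1) ^ (i + j) * (\<Sum>m\<le>i - j. ((- real a) gchoose m) * b i (j + m) x)"
    unfolding sum_distrib_left atLeast0AtMost
  proof (intro sum.cong)
    fix m assume "m \<in> {..i - j}"
    then have "(-1::real) ^ (i - j - m) = (-1) ^ (i + j) * (-1) ^ m"
      using assms(1)
      by (simp add: neg_one_power_diff neg_one_power_add_eq_neg_one_power_diff power_add)
    then show "(-1) ^ (i - j - m) * ((real a + real m - 1) gchoose m) * b i (j + m) x
        = (-1) ^ (i + j) * (((- real a) gchoose m) * b i (j + m) x)"
      by (simp add: gbinomial_minus)
  qed simp
  also have "\<dots> = (-1) ^ (i + j) * b i j (x - (real_of_int k + real j))"
    using b_shift_minus_Newton[of i j "i - j" x a] assms(1) unfolding a by simp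
  finally show ?thesis .
qed

theorem mainTheorem13:
  fixes i j :: nat and k :: int
  assumes "j \<le> i" and "k \<ge> 1 - int j"
  shows "(\<Sum>r = j..i. (-1) ^ (i - r) * (real_of_int (int r + k - 1) gchoose (r - j))
            * b i r (real_of_int k)) = b i j 0
       \<and> (\<Sum>r = j..i. (-1) ^ (i - r) * (real_of_int (int r + k - 1) gchoose (r - j))
            * b i r 0) = b i j (real_of_int k)"
proof -
  have "0 \<le> k + int j" using assms(2) by simp
  have sign: "(-1::real) ^ (i + j) * (-1) ^ (i + j) = 1"
    by (simp flip: power_mult_distrib)
  show ?thesis
    unfolding sum_alternating_gchoose_b[OF assms(1) \<open>0 \<le> k + int j\<close>]
    using b_reflect[of i j 0] b_reflect[of i j "real_of_int k"] sign
    by (simp add: mult.assoc[symmetric])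
qed

end
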